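(* Let $X$, $Y$ and $(Z,d)$ be metric spaces, $1\le\alpha<\omega_1$, and let $f\colon X\times Y\to Z$ satisfy: (1) the family $\{f^x:x\in X\}$ of $x$-sections is equi-$\alpha$-GLP (as functions $Y\to Z$); (2) for every $y\in Y$ the $y$-section $f_y\colon X\to Z$ is of Borel class $\alpha$. Then $f\colon X\times Y\to Z$ is of Borel class $\alpha$.
   Context: For $x\in X$, $y\in Y$: $f^x\colon Y\to Z$, $f^x(y)=f(x,y)$ and $f_y\colon X\to Z$, $f_y(x)=f(x,y)$. In a metric space, sets of additive class $0$ are the open sets, of multiplicative class $0$ the closed sets; for $\alpha\ge1$, sets of additive class $\alpha$ are countable unions of sets of multiplicative classes $<\alpha$, and sets of multiplicative class $\alpha$ are complements of sets of additive class $\alpha$ (so additive class 1 = $F_\sigma$). A function between metric spaces is of Borel class $\alpha$ if the preimage of every open set is of additive class $\alpha$. A family of subsets of $Y$ is discrete if each point has a neighborhood meeting at most one member; $\sigma$-discrete if it is a countable union of discrete families. A family $\mathscr F\subseteq Z^Y$ is equi-$\alpha$-GLP if for every $\varepsilon>0$ there is a $\sigma$-discrete family $\mathcal A_\varepsilon$ of subsets of $Y$ of additive class $\alpha$ such that $Y=\bigcup\mathcal A_\varepsilon$ and $\operatorname{diam}g(A)\le\varepsilon$ for all $A\in\mathcal A_\varepsilon$ and all $g\in\mathscr F$. *)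

theory Defs
  imports "HOL-Analysis.Analysis"
begin

text \<open>Countable ordinals \<open>\<alpha>\<close> are represented as order types of well-orders
  \<open>r :: (nat \<times> nat) set\<close>.  For \<open>a \<in> Field r\<close>, \<open>add_class_below r a\<close> is the family of
  sets of additive class \<open>\<beta>\<close>, where \<open>\<beta>\<close> is the order type of the strict initial
  segment of \<open>r\<close> below \<open>a\<close>.  Ordinals \<open>\<beta>\<close> smaller than the order type of \<open>r\<close>
  are exactly these order types.\<close>

definition add_class_below :: "(nat \<times> nat) set \<Rightarrow> nat \<Rightarrow> 'a::topological_space set set" where
  "add_class_below r = wfrec (r - Id)
     (\<lambda>C a. if \<not> (\<exists>b. (b, a) \<in> r - Id) then {U. open U}
            else {\<Union>\<U> | \<U>. countable \<U> \<and> (\<forall>V\<in>\<U>. \<exists>b. (b, a) \<in> r - Id \<and> - V \<in> C b)})"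

text \<open>Sets of additive class \<open>\<alpha>\<close>, \<open>\<alpha>\<close> = order type of \<open>r\<close>: open sets if \<open>\<alpha> = 0\<close>,
  otherwise countable unions of sets of multiplicative class \<open>\<beta> < \<alpha>\<close>
  (i.e. complements of sets of additive class \<open>\<beta>\<close>).\<close>

definition additive_class :: "(nat \<times> nat) set \<Rightarrow> 'a::topological_space set \<Rightarrow> bool" where
  "additive_class r A \<longleftrightarrow>
     (if Field r = {} then open A
      else (\<exists>\<U>. countable \<U> \<and> A = \<Union>\<U> \<and> (\<forall>V\<in>\<U>. \<exists>b\<in>Field r. - V \<in> add_class_below r b)))"

definition borel_class :: "(nat \<times> nat) set \<Rightarrow> ('a::topological_space \<Rightarrow> 'b::topological_space) \<Rightarrow> bool" where
  "borel_class r f \<longleftrightarrow> (\<forall>U. open U \<longrightarrow> additive_class r (f -` U))"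

definition discrete_family :: "'a::topological_space set set \<Rightarrow> bool" where
  "discrete_family \<A> \<longleftrightarrow>
     (\<forall>y. \<exists>U. open U \<and> y \<in> U \<and> (\<forall>A\<in>\<A>. \<forall>B\<in>\<A>. U \<inter> A \<noteq> {} \<and> U \<inter> B \<noteq> {} \<longrightarrow> A = B))"

definition sigma_discrete_family :: "'a::topological_space set set \<Rightarrow> bool" where
  "sigma_discrete_family \<A> \<longleftrightarrow>
     (\<exists>\<D>::nat \<Rightarrow> 'a set set. (\<forall>n. discrete_family (\<D> n)) \<and> \<A> = (\<Union>n. \<D> n))"

definition equi_GLP :: "(nat \<times> nat) set \<Rightarrow> ('b::metric_space \<Rightarrow> 'c::metric_space) set \<Rightarrow> bool" where
  "equi_GLP r \<F> \<longleftrightarrow>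
     (\<forall>\<epsilon>>0. \<exists>\<A>. sigma_discrete_family \<A> \<and> (\<forall>A\<in>\<A>. additive_class r A) \<and> \<Union>\<A> = UNIV \<and>
        (\<forall>A\<in>\<A>. \<forall>g\<in>\<F>. \<forall>a\<in>A. \<forall>b\<in>A. dist (g a) (g b) \<le> \<epsilon>))"

end

theory Submission
  imports Defs
begin

text \<open>Fix an open \<open>U \<noteq> Z\<close> and \<open>n\<close>. By equi-GLP, \<open>Y\<close> is covered by a \<open>\<sigma>\<close>-discrete family of
  sets \<open>A\<close> of additive class \<open>\<alpha>\<close> on which every \<open>x\<close>-section oscillates by at most \<open>1 / (n + 1)\<close>.
  Choosing a point \<open>y\<^sub>A \<in> A\<close>, \<open>f (x, y) \<in> U\<close> holds iff for some \<open>n\<close> and some \<open>A \<ni> y\<close> the point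
  \<open>f (x, y\<^sub>A)\<close> has distance more than \<open>1 / (n + 1)\<close> from \<open>Z - U\<close>. The set of such \<open>(x, y)\<close> for one
  \<open>A\<close> is the intersection of a preimage under the \<open>y\<^sub>A\<close>-section with \<open>X \<times> A\<close>, hence of additive
  class \<open>\<alpha>\<close>, and for fixed \<open>n\<close> these sets form countably many discrete families. It remains to
  see that the union of a discrete family of sets of additive class \<open>\<alpha>\<close> is again of that
  class. This is shown by transfinite induction, simultaneously for multiplicative classes,
  using that in a metric space every discrete family can be enlarged to a discrete family of
  open sets.\<close>

lemma open_imp_countable_union_of_closed:
  fixes S :: "'a::metric_space set"
  assumes "open S"
  shows "(countable union_of closed) S"
proof -
  have "fsigma_in euclidean S"
    using assms by (simp add: open_imp_fsigma_in metrizable_space_euclidean)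
  then show ?thesis
    unfolding fsigma_in_def by (rule union_of_mono) (metis closed_closedin)
qed

lemma countable_union_of_vimage:
  assumes "(countable union_of P) S" and "\<And>T. P T \<Longrightarrow> Q (g -` T)"
  shows "(countable union_of Q) (g -` S)"
proof -
  obtain \<U> where "countable \<U>" "\<U> \<subseteq> Collect P" "\<Union>\<U> = S"
    using assms(1) by (auto simp: union_of_def)
  then show ?thesis
    unfolding union_of_def using assms(2) by (intro exI[of _ "vimage g ` \<U>"]) auto
qed

lemma underS_induct:
  assumes "Well_order r" and "\<And>a. (\<And>b. b \<in> underS r a \<Longrightarrow> P b) \<Longrightarrow> P a"
  shows "P a"
  using assms wo_rel.well_order_induct[of r P a]
  by (auto simp: wo_rel_def Order_Relation.underS_def)

section \<open>Additive classes below a level\<close>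

definition mult_class_below :: "(nat \<times> nat) set \<Rightarrow> nat set \<Rightarrow> 'a::topological_space set \<Rightarrow> bool" where
  "mult_class_below r K V \<longleftrightarrow> (\<exists>b\<in>K. - V \<in> add_class_below r b)"

lemma add_class_below_eq:
  assumes "Well_order r"
  shows "add_class_below r a =
    (if underS r a = {} then Collect open
     else Collect (countable union_of mult_class_below r (underS r a)))"
proof -
  interpret wo_rel r
    using assms by (simp add: wo_rel_def)
  define H :: "(nat \<Rightarrow> 'a set set) \<Rightarrow> nat \<Rightarrow> 'a set set" where
    "H = (\<lambda>C a. if \<not> (\<exists>b. (b, a) \<in> r - Id) then {U. open U}
            else {\<Union>\<U> | \<U>. countable \<U> \<and> (\<forall>V\<in>\<U>. \<exists>b. (b, a) \<in> r - Id \<and> - V \<in> C b)})"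
  have "adm_wo H"
    unfolding adm_wo_def
  proof (intro allI impI)
    fix C D :: "nat \<Rightarrow> 'a set set" and x
    assume "\<forall>b\<in>underS x. C b = D b"
    then have CD: "(\<exists>b. (b, x) \<in> r - Id \<and> - V \<in> C b) \<longleftrightarrow> (\<exists>b. (b, x) \<in> r - Id \<and> - V \<in> D b)" for V
      by (auto simp: Order_Relation.underS_def)
    show "H C x = H D x"
      unfolding H_def by (simp only: CD)
  qed
  then have "add_class_below r = H (add_class_below r)"
    unfolding add_class_below_def H_def worec_def[symmetric] by (rule worec_fixpoint)
  then have "add_class_below r a = H (add_class_below r) a"
    by (rule fun_cong)
  moreover have in_underS: "(b, a) \<in> r - Id \<longleftrightarrow> b \<in> underS a" for b
    by (auto simp: Order_Relation.underS_def)
  moreover have step_eq: "{\<Union>\<U> | \<U>. countable \<U> \<and> (\<forall>V\<in>\<U>. \<exists>b. b \<in> underS a \<and> - V \<in> add_class_below r b)}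
      = Collect (countable union_of mult_class_below r (underS a))"
    unfolding union_of_def mult_class_below_def Bex_def by auto
  ultimately show ?thesis
    by (simp only: H_def in_underS step_eq ex_in_conv not_not)
qed

lemma add_class_below_bottom:
  "Well_order r \<Longrightarrow> underS r a = {} \<Longrightarrow> A \<in> add_class_below r a \<longleftrightarrow> open A"
  by (simp add: add_class_below_eq)

lemma add_class_below_step:
  "Well_order r \<Longrightarrow> underS r a \<noteq> {} \<Longrightarrow>
    A \<in> add_class_below r a \<longleftrightarrow> (countable union_of mult_class_below r (underS r a)) A"
  by (simp add: add_class_below_eq)

lemma additive_class_eq:
  "Field r \<noteq> {} \<Longrightarrow> additive_class r = countable union_of mult_class_below r (Field r)"
  unfolding additive_class_def union_of_def mult_class_below_def by (intro ext) auto

lemma open_in_add_class_below: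
  fixes A :: "'a::metric_space set"
  assumes wo: "Well_order r" and "open A"
  shows "A \<in> add_class_below r a"
  using assms(2)
proof (induction a arbitrary: A rule: underS_induct[OF wo])
  case (1 a)
  show ?case
  proof (cases "underS r a = {}")
    case True
    then show ?thesis
      using 1 by (simp add: add_class_below_bottom[OF wo])
  next
    case False
    have "(countable union_of closed) A"
      using 1(2) by (rule open_imp_countable_union_of_closed)
    then have "(countable union_of mult_class_below r (underS r a)) A"
    proof (rule union_of_mono)
      fix F :: "'a set"
      assume "closed F"
      then have "- F \<in> add_class_below r b" if "b \<in> underS r a" for b
        using 1(1)[OF that] by (simp add: open_Compl)
      then show "mult_class_below r (underS r a) F"
        using False by (auto simp: mult_class_below_def)
    qed
    then show ?thesis
      using False by (simp add: add_class_below_step[OF wo])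
  qed
qed

lemma mult_class_below_closed:
  fixes F :: "'a::metric_space set"
  assumes "Well_order r" "K \<noteq> {}" "closed F"
  shows "mult_class_below r K F"
proof -
  obtain b where "b \<in> K"
    using assms(2) by blast
  moreover have "- F \<in> add_class_below r b"
    using assms(1,3) by (simp add: open_in_add_class_below open_Compl)
  ultimately show ?thesis
    by (auto simp: mult_class_below_def)
qed

lemma closed_in_add_class_below:
  fixes F :: "'a::metric_space set"
  assumes "Well_order r" "underS r a \<noteq> {}" "closed F"
  shows "F \<in> add_class_below r a"
  using assms by (simp add: add_class_below_step countable_union_of_inc mult_class_below_closed)

lemma add_class_below_Un:
  assumes "Well_order r" "A \<in> add_class_below r a" "B \<in> add_class_below r a"
  shows "A \<union> B \<in> add_class_below r a"
  using assms by (cases "underS r a = {}")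
    (simp_all add: add_class_below_bottom add_class_below_step open_Un countable_union_of_Un)

lemma add_class_below_mono:
  fixes A :: "'a::metric_space set"
  assumes wo: "Well_order r" and "(b, a) \<in> r" "A \<in> add_class_below r b"
  shows "A \<in> add_class_below r a"
proof (cases "underS r b = {}")
  case True
  then show ?thesis
    using assms by (simp add: add_class_below_bottom open_in_add_class_below)
next
  case False
  interpret wo_rel r
    using wo by (simp add: wo_rel_def)
  have "underS b \<subseteq> underS a"
    using assms(2) by (simp add: underS_incr TRANS ANTISYM)
  have "(countable union_of mult_class_below r (underS b)) A"
    using False assms(3) by (simp add: add_class_below_step[OF wo])
  then have "(countable union_of mult_class_below r (underS a)) A"
    by (rule union_of_mono) (use \<open>underS b \<subseteq> underS a\<close> in \<open>auto simp: mult_class_below_def\<close>)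
  moreover have "underS a \<noteq> {}"
    using False \<open>underS b \<subseteq> underS a\<close> by blast
  ultimately show ?thesis
    by (simp add: add_class_below_step[OF wo])
qed

lemma mult_class_below_Int:
  fixes S T :: "'a::metric_space set"
  assumes wo: "Well_order r" and "K \<subseteq> Field r"
    and "mult_class_below r K S" "mult_class_below r K T"
  shows "mult_class_below r K (S \<inter> T)"
proof -
  obtain b b' where b: "b \<in> K" "- S \<in> add_class_below r b" and b': "b' \<in> K" "- T \<in> add_class_below r b'"
    using assms(3,4) by (auto simp: mult_class_below_def)
  have "b \<in> Field r" "b' \<in> Field r"
    using assms(2) b(1) b'(1) by auto
  then have "(b, b') \<in> r \<or> (b', b) \<in> r"
    using wo wo_rel.TOTALS[of r] by (simp add: wo_rel_def)
  then show ?thesis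
    using b b' add_class_below_mono[OF wo] add_class_below_Un[OF wo]
    by (metis Compl_Int mult_class_below_def sup_commute)
qed

lemma add_class_below_Int:
  fixes A B :: "'a::metric_space set"
  assumes wo: "Well_order r" and "A \<in> add_class_below r a" "B \<in> add_class_below r a"
  shows "A \<inter> B \<in> add_class_below r a"
proof (cases "underS r a = {}")
  case True
  then show ?thesis
    using assms by (simp add: add_class_below_bottom open_Int)
next
  case False
  have "(countable union_of mult_class_below r (underS r a)) (A \<inter> B)"
    using assms(2,3) False
    by (intro countable_union_of_Int)
      (auto simp: add_class_below_step[OF wo] intro: mult_class_below_Int[OF wo Order_Relation.underS_Field])
  then show ?thesis
    using False by (simp add: add_class_below_step[OF wo])
qed

lemma add_class_below_vimage:
  assumes wo: "Well_order r" and "continuous_on UNIV g" "A \<in> add_class_below r a"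
  shows "g -` A \<in> add_class_below r a"
  using assms(3)
proof (induction a arbitrary: A rule: underS_induct[OF wo])
  case (1 a)
  show ?case
  proof (cases "underS r a = {}")
    case True
    then show ?thesis
      using 1(2) assms(2) by (simp add: add_class_below_bottom[OF wo] open_vimage)
  next
    case False
    have "mult_class_below r (underS r a) (g -` V)" if "mult_class_below r (underS r a) V" for V
      using that 1(1) by (fastforce simp: mult_class_below_def simp flip: vimage_Compl)
    then show ?thesis
      using False 1(2) by (simp add: add_class_below_step[OF wo] countable_union_of_vimage)
  qed
qed

section \<open>Discrete families\<close>

definition discrete_indexed_family :: "'i set \<Rightarrow> ('i \<Rightarrow> 'a::topological_space set) \<Rightarrow> bool" where
  "discrete_indexed_family I S \<longleftrightarrow>
     (\<forall>x. \<exists>U. open U \<and> x \<in> U \<and> (\<forall>i\<in>I. \<forall>j\<in>I. U \<inter> S i \<noteq> {} \<and> U \<inter> S j \<noteq> {} \<longrightarrow> i = j))"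

lemma discrete_indexed_familyI:
  assumes "\<And>x. \<exists>U. open U \<and> x \<in> U \<and> (\<forall>i\<in>I. \<forall>j\<in>I. U \<inter> S i \<noteq> {} \<and> U \<inter> S j \<noteq> {} \<longrightarrow> i = j)"
  shows "discrete_indexed_family I S"
  unfolding discrete_indexed_family_def using assms by (rule allI)

lemma discrete_indexed_familyE:
  assumes "discrete_indexed_family I S"
  obtains U where "open U" "x \<in> U"
    "\<forall>i\<in>I. \<forall>j\<in>I. U \<inter> S i \<noteq> {} \<and> U \<inter> S j \<noteq> {} \<longrightarrow> i = j"
  using assms unfolding discrete_indexed_family_def by metis

lemma discrete_family_iff_indexed: "discrete_family \<A> \<longleftrightarrow> discrete_indexed_family \<A> (\<lambda>A. A)"
  unfolding discrete_family_def discrete_indexed_family_def by simp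

lemma discrete_indexed_family_subset:
  assumes "discrete_indexed_family I S" "J \<subseteq> I" "\<And>i. i \<in> J \<Longrightarrow> T i \<subseteq> S i"
  shows "discrete_indexed_family J T"
proof (rule discrete_indexed_familyI)
  fix x
  obtain U where U: "open U" "x \<in> U"
    "\<forall>i\<in>I. \<forall>j\<in>I. U \<inter> S i \<noteq> {} \<and> U \<inter> S j \<noteq> {} \<longrightarrow> i = j"
    using assms(1) by (rule discrete_indexed_familyE[of I S x])
  have "U \<inter> S i \<noteq> {}" if "i \<in> J" "U \<inter> T i \<noteq> {}" for i
    using that assms(3)[of i] by auto
  then have "\<forall>i\<in>J. \<forall>j\<in>J. U \<inter> T i \<noteq> {} \<and> U \<inter> T j \<noteq> {} \<longrightarrow> i = j"
    using U(3) assms(2) by (meson subsetD)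
  then show "\<exists>U. open U \<and> x \<in> U \<and> (\<forall>i\<in>J. \<forall>j\<in>J. U \<inter> T i \<noteq> {} \<and> U \<inter> T j \<noteq> {} \<longrightarrow> i = j)"
    using U(1,2) by (intro exI[of _ U]) simp
qed

lemma discrete_indexed_family_vimage:
  assumes "continuous_on UNIV g" "discrete_indexed_family I S"
  shows "discrete_indexed_family I (\<lambda>i. g -` S i)"
proof (rule discrete_indexed_familyI)
  fix x
  obtain U where U: "open U" "g x \<in> U"
    "\<forall>i\<in>I. \<forall>j\<in>I. U \<inter> S i \<noteq> {} \<and> U \<inter> S j \<noteq> {} \<longrightarrow> i = j"
    using assms(2) by (rule discrete_indexed_familyE[of I S "g x"])
  have "U \<inter> S i \<noteq> {}" if "g -` U \<inter> g -` S i \<noteq> {}" for i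
    using that by auto
  then have "\<forall>i\<in>I. \<forall>j\<in>I. g -` U \<inter> g -` S i \<noteq> {} \<and> g -` U \<inter> g -` S j \<noteq> {} \<longrightarrow> i = j"
    using U(3) by metis
  moreover have "open (g -` U)"
    using U(1) assms(1) by (rule open_vimage)
  ultimately show "\<exists>V. open V \<and> x \<in> V \<and>
      (\<forall>i\<in>I. \<forall>j\<in>I. V \<inter> g -` S i \<noteq> {} \<and> V \<inter> g -` S j \<noteq> {} \<longrightarrow> i = j)"
    using U(2) by (intro exI[of _ "g -` U"]) simp
qed

lemma discrete_indexed_family_imp_disjoint:
  assumes "discrete_indexed_family I S"
  shows "disjoint_family_on S I"
  unfolding disjoint_family_on_def
proof (intro ballI impI)
  fix i j
  assume ij: "i \<in> I" "j \<in> I" "i \<noteq> j"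
  show "S i \<inter> S j = {}"
  proof (rule equals0I)
    fix x
    assume "x \<in> S i \<inter> S j"
    moreover obtain U where "x \<in> U"
      "\<forall>i\<in>I. \<forall>j\<in>I. U \<inter> S i \<noteq> {} \<and> U \<inter> S j \<noteq> {} \<longrightarrow> i = j"
      using assms by (rule discrete_indexed_familyE[of I S x])
    ultimately show False
      using ij by auto
  qed
qed

lemma closed_discrete_Union:
  assumes "discrete_indexed_family I S" "\<And>i. i \<in> I \<Longrightarrow> closed (S i)"
  shows "closed (\<Union>i\<in>I. S i)"
proof -
  have "\<exists>U. open U \<and> x \<in> U \<and> finite {A \<in> S ` I. A \<inter> U \<noteq> {}}" for x
  proof -
    obtain U where U: "open U" "x \<in> U"
      "\<forall>i\<in>I. \<forall>j\<in>I. U \<inter> S i \<noteq> {} \<and> U \<inter> S j \<noteq> {} \<longrightarrow> i = j"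
      using assms(1) by (rule discrete_indexed_familyE[of I S x])
    have "{A \<in> S ` I. A \<inter> U \<noteq> {}} \<subseteq> S ` {i \<in> I. U \<inter> S i \<noteq> {}}"
      by (auto simp: Int_commute)
    moreover have "finite {i \<in> I. U \<inter> S i \<noteq> {}}"
    proof (cases "\<exists>i\<in>I. U \<inter> S i \<noteq> {}")
      case True
      then obtain i where "i \<in> I" "U \<inter> S i \<noteq> {}"
        by blast
      then have "{i \<in> I. U \<inter> S i \<noteq> {}} \<subseteq> {i}"
        using U(3) by auto
      then show ?thesis
        by (rule finite_subset) simp
    next
      case False
      then have "{i \<in> I. U \<inter> S i \<noteq> {}} = {}"
        by simp
      then show ?thesis
        by (simp only: finite.emptyI)
    qed
    ultimately show ?thesis
      using U(1,2) finite_surj by blast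
  qed
  then have "locally_finite_in euclidean (S ` I)"
    by (simp add: locally_finite_in_def)
  then show ?thesis
    using closedin_locally_finite_Union[of "S ` I" euclidean] assms(2) by auto
qed

text \<open>Take \<open>p\<close> among \<open>t\<close>, \<open>s\<close>, \<open>s'\<close> with the largest radius.\<close>

lemma pair_in_some_ball:
  fixes R :: "'a::metric_space \<Rightarrow> real"
  assumes pos: "\<And>p. R p > 0"
    and s: "dist t s < R t / 4 + R s / 4" and s': "dist t s' < R t / 4 + R s' / 4"
  obtains p where "dist p s < R p" "dist p s' < R p"
proof -
  have triangle: "dist s s' \<le> dist t s + dist t s'" "dist s' s \<le> dist t s + dist t s'"
    by (simp_all add: dist_triangle2 dist_commute)
  consider "R s \<le> R t" "R s' \<le> R t" | "R t < R s" "R s' \<le> R s" | "R t < R s'" "R s < R s'"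
    by linarith
  then show thesis
  proof cases
    case 1
    have "dist t s < R t"
      using 1 s pos[of t] by linarith
    moreover have "dist t s' < R t"
      using 1 s' pos[of t] by linarith
    ultimately show thesis
      by (rule that)
  next
    case 2
    have "dist s s' < R s"
      using 2 triangle s s' by linarith
    then show thesis
      using that[of s] pos[of s] by simp
  next
    case 3
    have "dist s' s < R s'"
      using 3 triangle s s' by linarith
    then show thesis
      using that[of s'] pos[of s'] by simp
  qed
qed

lemma discrete_indexed_family_radius:
  fixes S :: "'i \<Rightarrow> 'a::metric_space set"
  assumes "discrete_indexed_family I S"
  obtains R where "\<And>x. R x > 0"
    "\<And>x. \<forall>i\<in>I. \<forall>j\<in>I. ball x (R x) \<inter> S i \<noteq> {} \<and> ball x (R x) \<inter> S j \<noteq> {} \<longrightarrow> i = j"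
proof -
  have "\<exists>e>0. \<forall>i\<in>I. \<forall>j\<in>I. ball x e \<inter> S i \<noteq> {} \<and> ball x e \<inter> S j \<noteq> {} \<longrightarrow> i = j" for x
  proof -
    obtain U where "open U" "x \<in> U" and U: "\<forall>i\<in>I. \<forall>j\<in>I. U \<inter> S i \<noteq> {} \<and> U \<inter> S j \<noteq> {} \<longrightarrow> i = j"
      using assms by (rule discrete_indexed_familyE[of I S x])
    obtain e where "e > 0" "ball x e \<subseteq> U"
      using \<open>open U\<close> \<open>x \<in> U\<close> by (rule openE)
    moreover have "U \<inter> S i \<noteq> {}" if "ball x e \<inter> S i \<noteq> {}" for i
      using that \<open>ball x e \<subseteq> U\<close> by auto
    ultimately show ?thesis
      using U by (intro exI[of _ e]) auto
  qed
  then obtain R where R_pos: "\<And>x. R x > 0"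
    and R: "\<And>x. \<forall>i\<in>I. \<forall>j\<in>I. ball x (R x) \<inter> S i \<noteq> {} \<and> ball x (R x) \<inter> S j \<noteq> {} \<longrightarrow> i = j"
    by metis
  show thesis
    by (rule that[OF R_pos R])
qed

lemma discrete_indexed_family_open_superset:
  fixes S :: "'i \<Rightarrow> 'a::metric_space set"
  assumes "discrete_indexed_family I S"
  obtains G where "\<And>i. open (G i)" "\<And>i. i \<in> I \<Longrightarrow> S i \<subseteq> G i" "discrete_indexed_family I G"
proof -
  obtain R where R_pos: "\<And>x. R x > 0"
    and R: "\<And>x. \<forall>i\<in>I. \<forall>j\<in>I. ball x (R x) \<inter> S i \<noteq> {} \<and> ball x (R x) \<inter> S j \<noteq> {} \<longrightarrow> i = j"
    using assms by (rule discrete_indexed_family_radius) (rule that)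
  define G where "G i = (\<Union>s\<in>S i. ball s (R s / 4))" for i
  have near: "\<exists>s\<in>S i. dist t s < R t / 4 + R s / 4" if ne: "ball t (R t / 4) \<inter> G i \<noteq> {}" for t i
  proof -
    obtain y where y: "y \<in> ball t (R t / 4)" "y \<in> G i"
      using ne by (meson disjoint_iff)
    then obtain s where "s \<in> S i" "dist s y < R s / 4"
      by (auto simp: G_def)
    moreover have "dist t s \<le> dist t y + dist s y"
      by (rule dist_triangle2)
    ultimately show ?thesis
      using y(1) by (intro bexI[of _ s]) (simp_all add: mem_ball)
  qed
  show thesis
  proof
    show "open (G i)" for i
      by (simp add: G_def open_UN)
    show "S i \<subseteq> G i" for i
      using R_pos by (force simp: G_def)
    show "discrete_indexed_family I G"
    proof (rule discrete_indexed_familyI)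
      fix t
      have "i = j" if ij: "i \<in> I" "j \<in> I" "ball t (R t / 4) \<inter> G i \<noteq> {}" "ball t (R t / 4) \<inter> G j \<noteq> {}" for i j
      proof -
        obtain s s' where "s \<in> S i" "dist t s < R t / 4 + R s / 4" "s' \<in> S j" "dist t s' < R t / 4 + R s' / 4"
          using near[OF ij(3)] near[OF ij(4)] by blast
        moreover obtain p where "dist p s < R p" "dist p s' < R p"
          using pair_in_some_ball[OF R_pos \<open>dist t s < _\<close> \<open>dist t s' < _\<close>] .
        ultimately have "ball p (R p) \<inter> S i \<noteq> {}" "ball p (R p) \<inter> S j \<noteq> {}"
          by auto
        then show "i = j"
          using R[of p] ij(1,2) by blast
      qed
      then show "\<exists>U. open U \<and> t \<in> U \<and> (\<forall>i\<in>I. \<forall>j\<in>I. U \<inter> G i \<noteq> {} \<and> U \<inter> G j \<noteq> {} \<longrightarrow> i = j)"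
        using R_pos[of t] by (intro exI[of _ "ball t (R t / 4)"]) simp
    qed
  qed
qed

section \<open>Discrete unions of sets of a fixed class\<close>

text \<open>Write \<open>S i = (\<Union>k. N i k)\<close> with \<open>N i k\<close> of multiplicative class \<open>c i k \<in> K\<close>. For fixed \<open>k\<close>
  and \<open>b\<close>, the \<open>N i k\<close> with \<open>c i k = b\<close> form a discrete family of sets of one multiplicative
  class, whose union is again of that class by hypothesis \<open>Compl\<close>.\<close>

lemma countable_union_of_mult_class_discrete_Union:
  fixes S :: "'i \<Rightarrow> 'a::metric_space set"
  assumes wo: "Well_order r" and "K \<noteq> {}"
    and Compl: "\<And>b J (T :: 'i \<Rightarrow> 'a set). b \<in> K \<Longrightarrow> discrete_indexed_family J T \<Longrightarrow>
      (\<And>j. j \<in> J \<Longrightarrow> - T j \<in> add_class_below r b) \<Longrightarrow> - (\<Union>j\<in>J. T j) \<in> add_class_below r b"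
    and disc: "discrete_indexed_family I S"
    and S: "\<And>i. i \<in> I \<Longrightarrow> (countable union_of mult_class_below r K) (S i)"
  shows "(countable union_of mult_class_below r K) (\<Union>i\<in>I. S i)"
proof -
  have empty: "mult_class_below r K ({} :: 'a set)"
    by (rule mult_class_below_closed[OF wo \<open>K \<noteq> {}\<close>]) simp
  define N where "N i = (SOME N. (\<forall>k::nat. mult_class_below r K (N k)) \<and> \<Union>(range N) = S i)" for i
  have ex: "\<exists>N. (\<forall>k::nat. mult_class_below r K (N k)) \<and> \<Union>(range N) = S i" if "i \<in> I" for i
    using S[OF that] unfolding countable_union_of_explicit[of "mult_class_below r K", OF empty] .
  have "(\<forall>k. mult_class_below r K (N i k)) \<and> \<Union>(range (N i)) = S i" if "i \<in> I" for i
    unfolding N_def using ex[OF that] by (rule someI_ex)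
  then have N: "\<And>i k. i \<in> I \<Longrightarrow> mult_class_below r K (N i k)"
    and S_eq: "\<And>i. i \<in> I \<Longrightarrow> S i = (\<Union>k. N i k)"
    by auto
  define c where "c i k = (SOME b. b \<in> K \<and> - N i k \<in> add_class_below r b)" for i k
  have c: "c i k \<in> K" "- N i k \<in> add_class_below r (c i k)" if "i \<in> I" for i k
    using someI_ex[OF N[OF that, of k, unfolded mult_class_below_def Bex_def]] by (simp_all add: c_def)
  define T where "T k b = (\<Union>i\<in>{i \<in> I. c i k = b}. N i k)" for k b
  have T: "mult_class_below r K (T k b)" if "b \<in> K" for k b
  proof -
    have "discrete_indexed_family {i \<in> I. c i k = b} (\<lambda>i. N i k)"
      using disc by (rule discrete_indexed_family_subset) (auto simp: S_eq)
    then have "- T k b \<in> add_class_below r b"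
      unfolding T_def by (rule Compl[OF that]) (auto intro: c(2))
    then show ?thesis
      using that by (auto simp: mult_class_below_def)
  qed
  have "(\<Union>i\<in>I. S i) = (\<Union>k. \<Union>b\<in>K. T k b)"
    using c(1) by (auto simp: S_eq T_def)
  then show ?thesis
    by (simp only:) (intro countable_union_of_UN countable_union_of_inc T; simp)
qed

text \<open>Enlarge the \<open>S i\<close> to a discrete family of open sets \<open>G i\<close>. The complement of \<open>\<Union>i. S i\<close>
  is then the closed set \<open>- (\<Union>i. G i)\<close> together with the discrete union of the sets
  \<open>G i \<inter> - S i\<close>, which are of the same additive class as the \<open>- S i\<close>.\<close>

lemma add_class_below_discrete_Union_Compl:
  fixes S :: "'i \<Rightarrow> 'a::metric_space set"
  assumes wo: "Well_order r" and disc: "discrete_indexed_family I S"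
    and S: "\<And>i. i \<in> I \<Longrightarrow> - S i \<in> add_class_below r a"
    and Union: "\<And>J (T :: 'i \<Rightarrow> 'a set). discrete_indexed_family J T \<Longrightarrow>
      (\<And>j. j \<in> J \<Longrightarrow> T j \<in> add_class_below r a) \<Longrightarrow> (\<Union>j\<in>J. T j) \<in> add_class_below r a"
  shows "- (\<Union>i\<in>I. S i) \<in> add_class_below r a"
proof (cases "underS r a = {}")
  case True
  have "closed (\<Union>i\<in>I. S i)"
    using disc by (rule closed_discrete_Union) (use S True in \<open>simp add: add_class_below_bottom[OF wo] closed_def\<close>)
  then show ?thesis
    using True by (simp add: add_class_below_bottom[OF wo] closed_def)
next
  case False
  obtain G where G_open: "\<And>i. open (G i)" and G_sup: "\<And>i. i \<in> I \<Longrightarrow> S i \<subseteq> G i"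
    and G_disc: "discrete_indexed_family I G"
    using disc by (rule discrete_indexed_family_open_superset) (rule that)
  have "disjoint_family_on G I"
    using G_disc by (rule discrete_indexed_family_imp_disjoint)
  then have G_unique: "i = j" if "i \<in> I" "j \<in> I" "x \<in> G i" "x \<in> G j" for i j x
    using disjoint_family_onD[of G I i j] that by auto
  have G_mem: "x \<in> G i" if "x \<in> S i" "i \<in> I" for x i
    using that G_sup by blast
  have eq: "- (\<Union>i\<in>I. S i) = - (\<Union>i\<in>I. G i) \<union> (\<Union>i\<in>I. G i \<inter> - S i)"
    by (auto dest: G_mem) (metis G_mem G_unique)
  have "- (\<Union>i\<in>I. G i) \<in> add_class_below r a"
    using G_open by (intro closed_in_add_class_below[OF wo False] closed_Compl open_UN) auto
  moreover have "(\<Union>i\<in>I. G i \<inter> - S i) \<in> add_class_below r a"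
  proof (rule Union)
    show "discrete_indexed_family I (\<lambda>i. G i \<inter> - S i)"
      using G_disc by (rule discrete_indexed_family_subset) auto
    show "G i \<inter> - S i \<in> add_class_below r a" if "i \<in> I" for i
      using G_open S[OF that] by (simp add: add_class_below_Int open_in_add_class_below wo)
  qed
  ultimately show ?thesis
    unfolding eq by (rule add_class_below_Un[OF wo])
qed

theorem add_class_below_discrete_Union:
  fixes S :: "'i \<Rightarrow> 'a::metric_space set"
  assumes wo: "Well_order r" and "discrete_indexed_family I S"
    and "\<And>i. i \<in> I \<Longrightarrow> S i \<in> add_class_below r a"
  shows "(\<Union>i\<in>I. S i) \<in> add_class_below r a"
  using assms(2,3)
proof (induction a arbitrary: I S rule: underS_induct[OF wo])
  case (1 a)
  show ?case
  proof (cases "underS r a = {}")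
    case True
    then show ?thesis
      using 1(3) by (simp add: add_class_below_bottom[OF wo] open_UN)
  next
    case False
    have Compl: "- (\<Union>j\<in>J. T j) \<in> add_class_below r b"
      if "b \<in> underS r a" "discrete_indexed_family J T" "\<And>j. j \<in> J \<Longrightarrow> - T j \<in> add_class_below r b"
      for b J and T :: "'i \<Rightarrow> 'a set"
      using wo that(2,3) 1(1)[OF that(1)] by (rule add_class_below_discrete_Union_Compl)
    have "(countable union_of mult_class_below r (underS r a)) (S i)" if "i \<in> I" for i
      using 1(3)[OF that] False by (simp add: add_class_below_step[OF wo])
    then have "(countable union_of mult_class_below r (underS r a)) (\<Union>i\<in>I. S i)"
      using countable_union_of_mult_class_discrete_Union[OF wo False Compl 1(2)] by blast
    then show ?thesis
      using False by (simp add: add_class_below_step[OF wo])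
  qed
qed

lemma additive_class_open:
  fixes A :: "'a::metric_space set"
  assumes wo: "Well_order r" and F: "Field r \<noteq> {}" and "open A"
  shows "additive_class r A"
proof -
  have "(countable union_of closed) A"
    using \<open>open A\<close> by (rule open_imp_countable_union_of_closed)
  then show ?thesis
    unfolding additive_class_eq[OF F] by (rule union_of_mono) (rule mult_class_below_closed[OF wo F])
qed

lemma additive_class_Int:
  fixes A B :: "'a::metric_space set"
  assumes wo: "Well_order r" and F: "Field r \<noteq> {}" and "additive_class r A" "additive_class r B"
  shows "additive_class r (A \<inter> B)"
  using assms(3,4) unfolding additive_class_eq[OF F]
  by (rule countable_union_of_Int) (auto intro: mult_class_below_Int[OF wo subset_refl])

lemma additive_class_vimage:
  assumes wo: "Well_order r" and F: "Field r \<noteq> {}" and g: "continuous_on UNIV g"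
    and "additive_class r A"
  shows "additive_class r (g -` A)"
  using assms(4) unfolding additive_class_eq[OF F]
proof (rule countable_union_of_vimage)
  fix V :: "'b set"
  assume "mult_class_below r (Field r) V"
  then show "mult_class_below r (Field r) (g -` V)"
    using add_class_below_vimage[OF wo g] by (auto simp: mult_class_below_def simp flip: vimage_Compl)
qed

lemma additive_class_UN:
  assumes F: "Field r \<noteq> {}" and "countable I" and "\<And>i. i \<in> I \<Longrightarrow> additive_class r (A i)"
  shows "additive_class r (\<Union>i\<in>I. A i)"
  using assms(2,3) unfolding additive_class_eq[OF F] by (rule countable_union_of_UN)

lemma additive_class_discrete_Union:
  fixes S :: "'i \<Rightarrow> 'a::metric_space set"
  assumes wo: "Well_order r" and F: "Field r \<noteq> {}"
    and "discrete_indexed_family I S" and "\<And>i. i \<in> I \<Longrightarrow> additive_class r (S i)"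
  shows "additive_class r (\<Union>i\<in>I. S i)"
proof -
  have Compl: "- (\<Union>j\<in>J. T j) \<in> add_class_below r b"
    if "b \<in> Field r" "discrete_indexed_family J T" "\<And>j. j \<in> J \<Longrightarrow> - T j \<in> add_class_below r b"
    for b J and T :: "'i \<Rightarrow> 'a set"
    \<comment> \<open>valid at every level\<close>
    using wo that(2)
  proof (rule add_class_below_discrete_Union_Compl)
    show "- T j \<in> add_class_below r b" if "j \<in> J" for j
      using that by (rule \<open>\<And>j. j \<in> J \<Longrightarrow> - T j \<in> add_class_below r b\<close>)
    show "(\<Union>j\<in>J'. T' j) \<in> add_class_below r b"
      if "discrete_indexed_family J' T'" "\<And>j. j \<in> J' \<Longrightarrow> T' j \<in> add_class_below r b" for J' and T' :: "'i \<Rightarrow> 'a set"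
      using wo that by (rule add_class_below_discrete_Union)
  qed
  have "(countable union_of mult_class_below r (Field r)) (S i)" if "i \<in> I" for i
    using assms(4)[OF that] by (simp add: additive_class_eq[OF F])
  then have "(countable union_of mult_class_below r (Field r)) (\<Union>i\<in>I. S i)"
    using countable_union_of_mult_class_discrete_Union[OF wo F Compl assms(3)] by blast
  then show ?thesis
    by (simp add: additive_class_eq[OF F])
qed

section \<open>Functions with equi-GLP sections\<close>

lemma equi_GLP_discrete_covers:
  fixes \<F> :: "('b::metric_space \<Rightarrow> 'c::metric_space) set"
  assumes "equi_GLP r \<F>"
  obtains \<D> :: "nat \<Rightarrow> nat \<Rightarrow> 'b set set" where
    "\<And>n m. discrete_family (\<D> n m)"
    "\<And>n m A. A \<in> \<D> n m \<Longrightarrow> additive_class r A"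
    "\<And>n. (\<Union>m. \<Union>(\<D> n m)) = UNIV"
    "\<And>n m A g a b. A \<in> \<D> n m \<Longrightarrow> g \<in> \<F> \<Longrightarrow> a \<in> A \<Longrightarrow> b \<in> A \<Longrightarrow> dist (g a) (g b) \<le> inverse (Suc n)"
proof -
  define P where "P n \<A> \<longleftrightarrow> sigma_discrete_family \<A> \<and> (\<forall>A\<in>\<A>. additive_class r A) \<and> \<Union>\<A> = UNIV \<and>
    (\<forall>A\<in>\<A>. \<forall>g\<in>\<F>. \<forall>a\<in>A. \<forall>b\<in>A. dist (g a) (g b) \<le> inverse (Suc n))" for n \<A>
  have "\<forall>n. \<exists>\<A>. P n \<A>"
    using assms unfolding equi_GLP_def P_def by simp
  then obtain \<A> where \<A>: "\<forall>n. P n (\<A> n)"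
    by (auto dest: choice)
  then have \<D>_ex: "\<forall>n. \<exists>\<D>::nat \<Rightarrow> 'b set set. (\<forall>m. discrete_family (\<D> m)) \<and> \<A> n = (\<Union>m. \<D> m)"
    unfolding P_def sigma_discrete_family_def by simp
  obtain \<D> :: "nat \<Rightarrow> nat \<Rightarrow> 'b set set" where \<D>: "\<forall>n. (\<forall>m. discrete_family (\<D> n m)) \<and> \<A> n = (\<Union>m. \<D> n m)"
    using choice[OF \<D>_ex] by (elim exE) (rule that)
  show thesis
  proof
    show "discrete_family (\<D> n m)" for n m
      using \<D> by simp
    show "additive_class r A" if "A \<in> \<D> n m" for n m A
      using \<A> \<D> that unfolding P_def by auto
    show "(\<Union>m. \<Union>(\<D> n m)) = UNIV" for n
    proof -
      have "(\<Union>m. \<Union>(\<D> n m)) = \<Union>(\<A> n)"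
        using \<D> by auto
      also have "\<dots> = UNIV"
        using \<A> unfolding P_def by simp
      finally show ?thesis .
    qed
    show "dist (g a) (g b) \<le> inverse (Suc n)" if "A \<in> \<D> n m" "g \<in> \<F>" "a \<in> A" "b \<in> A" for n m A g a b
      using \<A> \<D> that unfolding P_def by auto
  qed
qed

text \<open>\<open>SOME a. a \<in> A\<close> is a reference point of \<open>A\<close>; the margin \<open>1 / (n + 1)\<close> absorbs the
  oscillation of the \<open>x\<close>-sections on \<open>A\<close>.\<close>

lemma vimage_open_eq_Union_cylinders:
  fixes f :: "'a \<times> 'b \<Rightarrow> 'c::metric_space" and \<D> :: "nat \<Rightarrow> nat \<Rightarrow> 'b set set"
  assumes "open U" "U \<noteq> UNIV"
    and cover: "\<And>n. (\<Union>m. \<Union>(\<D> n m)) = UNIV"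
    and small: "\<And>n m A x a b. A \<in> \<D> n m \<Longrightarrow> a \<in> A \<Longrightarrow> b \<in> A \<Longrightarrow> dist (f (x, a)) (f (x, b)) \<le> inverse (Suc n)"
  shows "f -` U = (\<Union>n m. \<Union>A\<in>\<D> n m.
    {(x, y). y \<in> A \<and> f (x, SOME a. a \<in> A) \<in> {z. inverse (Suc n) < infdist z (- U)}})" (is "_ = ?R")
proof -
  have close: "\<bar>infdist (f (x, SOME a. a \<in> A)) (- U) - infdist (f (x, y)) (- U)\<bar> \<le> inverse (Suc n)"
    if "A \<in> \<D> n m" "y \<in> A" for n m A x y
  proof -
    have "(SOME a. a \<in> A) \<in> A"
      using that(2) by (rule someI)
    then show ?thesis
      by (rule order_trans[OF infdist_triangle_abs small[OF that(1) _ that(2)]])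
  qed
  show ?thesis
  proof (intro equalityI subsetI)
    fix p
    assume "p \<in> f -` U"
    then obtain x y where p: "p = (x, y)" "f (x, y) \<in> U"
      by (cases p) auto
    have "0 < infdist (f (x, y)) (- U)"
      using assms(1,2) p(2) by (intro infdist_pos_not_in_closed) auto
    then obtain n where n: "inverse (Suc n) < infdist (f (x, y)) (- U) / 2"
      using reals_Archimedean[of "infdist (f (x, y)) (- U) / 2"] by auto
    have "y \<in> (\<Union>m. \<Union>(\<D> n m))"
      using cover[of n] by simp
    then obtain m A where A: "A \<in> \<D> n m" "y \<in> A"
      by blast
    have "inverse (Suc n) < infdist (f (x, SOME a. a \<in> A)) (- U)"
      using close[OF A, of x] n unfolding abs_le_iff by linarith
    then show "p \<in> ?R"
      using p(1) A by blast
  next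
    fix p
    assume "p \<in> ?R"
    then obtain n m A x y where p: "p = (x, y)" and A: "A \<in> \<D> n m" "y \<in> A"
      and far: "inverse (Suc n) < infdist (f (x, SOME a. a \<in> A)) (- U)"
      by auto
    have "0 < infdist (f (x, y)) (- U)"
      using close[OF A, of x] far unfolding abs_le_iff by linarith
    then show "p \<in> f -` U"
      using p by (metis ComplI infdist_zero less_irrefl vimage_eq)
  qed
qed

lemma additive_class_section_cylinder:
  fixes f :: "'a::metric_space \<times> 'b::metric_space \<Rightarrow> 'c::metric_space" and A :: "'b set"
  assumes wo: "Well_order r" and F: "Field r \<noteq> {}"
    and "borel_class r (\<lambda>x. f (x, y))" "open W" "additive_class r A"
  shows "additive_class r {(x, y'). y' \<in> A \<and> f (x, y) \<in> W}"
proof -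
  have "additive_class r ((\<lambda>x. f (x, y)) -` W)"
    using assms(3,4) unfolding borel_class_def by blast
  then have "additive_class r (fst -` ((\<lambda>x. f (x, y)) -` W) :: ('a \<times> 'b) set)"
    by (rule additive_class_vimage[OF wo F continuous_on_fst[OF continuous_on_id]])
  moreover have "additive_class r (snd -` A :: ('a \<times> 'b) set)"
    using assms(5) by (rule additive_class_vimage[OF wo F continuous_on_snd[OF continuous_on_id]])
  ultimately have "additive_class r (fst -` ((\<lambda>x. f (x, y)) -` W) \<inter> snd -` A)"
    by (rule additive_class_Int[OF wo F])
  moreover have "fst -` ((\<lambda>x. f (x, y)) -` W) \<inter> snd -` A = {(x, y'). y' \<in> A \<and> f (x, y) \<in> W}"
    by auto
  ultimately show ?thesis
    by simp
qed

lemma additive_class_vimage_open_of_small_covers: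
  fixes f :: "'a::metric_space \<times> 'b::metric_space \<Rightarrow> 'c::metric_space" and \<D> :: "nat \<Rightarrow> nat \<Rightarrow> 'b set set"
  assumes wo: "Well_order r" and F: "Field r \<noteq> {}"
    and sections: "\<And>y. borel_class r (\<lambda>x. f (x, y))"
    and disc: "\<And>n m. discrete_family (\<D> n m)"
    and cls: "\<And>n m A. A \<in> \<D> n m \<Longrightarrow> additive_class r A"
    and cover: "\<And>n. (\<Union>m. \<Union>(\<D> n m)) = UNIV"
    and small: "\<And>n m A x a b. A \<in> \<D> n m \<Longrightarrow> a \<in> A \<Longrightarrow> b \<in> A \<Longrightarrow> dist (f (x, a)) (f (x, b)) \<le> inverse (Suc n)"
    and "open U"
  shows "additive_class r (f -` U)"
proof (cases "U = UNIV")
  case True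
  then show ?thesis
    using additive_class_open[OF wo F open_UNIV] by simp
next
  case False
  define P where "P n A = {(x, y). y \<in> A \<and> f (x, SOME a. a \<in> A) \<in> {z. inverse (Suc n) < infdist z (- U)}}"
    for n A
  have "f -` U = (\<Union>n m. \<Union>A\<in>\<D> n m. P n A)"
    unfolding P_def using \<open>open U\<close> False cover small by (rule vimage_open_eq_Union_cylinders)
  moreover have "additive_class r (P n A)" if "A \<in> \<D> n m" for n m A
    unfolding P_def using wo F sections _ cls[OF that]
    by (rule additive_class_section_cylinder) (intro open_Collect_less continuous_intros)
  moreover have "discrete_indexed_family (\<D> n m) (P n)" for n m
    using discrete_indexed_family_vimage[OF continuous_on_snd[OF continuous_on_id] disc[unfolded discrete_family_iff_indexed]]
    by (rule discrete_indexed_family_subset) (auto simp: P_def)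
  ultimately show ?thesis
    by (simp add: additive_class_UN additive_class_discrete_Union wo F)
qed

theorem theorem3p19:
  fixes f :: "'a::metric_space \<times> 'b::metric_space \<Rightarrow> 'c::metric_space"
    and r :: "(nat \<times> nat) set"
  assumes "Well_order r" and "Field r \<noteq> {}"
    and "equi_GLP r {(\<lambda>y. f (x, y)) | x. True}"
    and "\<And>y. borel_class r (\<lambda>x. f (x, y))"
  shows "borel_class r f"
proof -
  obtain \<D> :: "nat \<Rightarrow> nat \<Rightarrow> 'b set set" where disc: "\<And>n m. discrete_family (\<D> n m)"
    and cls: "\<And>n m A. A \<in> \<D> n m \<Longrightarrow> additive_class r A"
    and cover: "\<And>n. (\<Union>m. \<Union>(\<D> n m)) = UNIV"
    and small: "\<And>n m A g a b. A \<in> \<D> n m \<Longrightarrow> g \<in> {(\<lambda>y. f (x, y)) | x. True} \<Longrightarrow> a \<in> A \<Longrightarrow> b \<in> A \<Longrightarrow>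
      dist (g a) (g b) \<le> inverse (Suc n)"
    using assms(3) by (rule equi_GLP_discrete_covers) (rule that)
  have small_sections: "dist (f (x, a)) (f (x, b)) \<le> inverse (Suc n)"
    if "A \<in> \<D> n m" "a \<in> A" "b \<in> A" for n m A x a b
    using small[OF that(1) _ that(2,3), of "\<lambda>y. f (x, y)"] by blast
  show ?thesis
    unfolding borel_class_def
    using additive_class_vimage_open_of_small_covers[where \<D> = \<D>, OF assms(1,2,4)] disc cls cover small_sections
    by blast
qed

end
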